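(* Fix a finite complete graph $K$, a vertex $x\in V(K)$, an edge probability measure $\mu$ on $E(K)$, and an integer $m\ge 2$. Then \[ \sum_{\substack{P\in\mathrm{cp}(K,P_{m+1}),\\ \deg_P(x)=1}}\mu(P)\le\bar\mu(x)\Bigl(\frac{1-\bar\mu(x)}{m-1}\Bigr)^{m-1}. \]
   Context: $P_{m+1}$ is the path on $m+1$ vertices; $\mathrm{cp}(K,P_{m+1})$ is the set of subgraphs of $K$ isomorphic to $P_{m+1}$. An edge probability measure on $K$ is a probability measure $\mu$ on $E(K)$; for a subgraph $H\subseteq K$, $\mu(H)=\prod_{e\in E(H)}\mu(e)$; and $\bar\mu(x)=\sum_{y\in V(K)\setminus\{x\}}\mu(xy)$. *)

theory Defs
  imports Complex_Main
begin

definition K_edges :: "'a set \<Rightarrow> 'a set set" where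
  "K_edges V = {e. e \<subseteq> V \<and> card e = 2}"

definition edge_prob_measure :: "'a set \<Rightarrow> ('a set \<Rightarrow> real) \<Rightarrow> bool" where
  "edge_prob_measure V \<mu> \<longleftrightarrow> (\<forall>e \<in> K_edges V. 0 \<le> \<mu> e) \<and> (\<Sum>e \<in> K_edges V. \<mu> e) = 1"

text \<open>Copies of the path on m+1 vertices in K, each represented by its edge set
  (a path with at least one edge is determined by its edge set).\<close>
definition path_copies :: "'a set \<Rightarrow> nat \<Rightarrow> 'a set set set" where
  "path_copies V m = {{{vs ! i, vs ! Suc i} | i. i < m} | vs.
      length vs = m + 1 \<and> distinct vs \<and> set vs \<subseteq> V}"

definition deg_in :: "'a set set \<Rightarrow> 'a \<Rightarrow> nat" where
  "deg_in P x = card {e \<in> P. x \<in> e}"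

definition mu_sub :: "('a set \<Rightarrow> real) \<Rightarrow> 'a set set \<Rightarrow> real" where
  "mu_sub \<mu> H = (\<Prod>e \<in> H. \<mu> e)"

definition mu_bar :: "'a set \<Rightarrow> ('a set \<Rightarrow> real) \<Rightarrow> 'a \<Rightarrow> real" where
  "mu_bar V \<mu> x = (\<Sum>y \<in> V - {x}. \<mu> {x, y})"

end

theory Submission
  imports Defs "HOL-Analysis.Convex"
begin

text \<open>Orienting each counted path away from its end vertex x turns it into a vertex sequence
  starting at x. Let W(U) be the total weight of the edges inside U. The weight sum over the
  sequences with k edges in U starting at v is at most (W(U) / k)^k: splitting off the first
  edge {v, u} and using this bound inside U - v gives at most mu_bar(v) (W(U - v) / (k - 1))^(k - 1),
  which AM-GM bounds by ((mu_bar(v) + W(U - v)) / k)^k = (W(U) / k)^k. The theorem stops after the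
  first split at v = x, where W(V - x) = 1 - mu_bar(x).\<close>

lemma power_mult_le_mean_power:
  fixes s t :: real
  assumes "0 \<le> s" "0 \<le> t"
  shows "s * t ^ k \<le> ((s + real k * t) / real (Suc k)) ^ Suc k"
proof -
  define y where "y i = (if i = 0 then s else t)" for i :: nat
  have y_nonneg: "0 \<le> y i" for i
    using assms by (simp add: y_def)
  have prod: "(\<Prod>i\<le>k. y i) = s * t ^ k"
    by (simp add: y_def prod.atMost_shift)
  have mean: "(\<Sum>i\<le>k. y i / card {..k}) = (s + real k * t) / real (Suc k)"
    by (simp add: y_def sum.atMost_shift add_divide_distrib)
  have "((s * t ^ k) powr (1 / real (Suc k))) ^ Suc k
      = ((s * t ^ k) powr (1 / real (Suc k))) powr real (Suc k)"
    by (rule powr_realpow' [symmetric]) auto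
  also have "\<dots> = s * t ^ k"
    using assms by (simp add: powr_powr)
  finally have "s * t ^ k = ((s * t ^ k) powr (1 / real (Suc k))) ^ Suc k" ..
  also have "\<dots> \<le> ((s + real k * t) / real (Suc k)) ^ Suc k"
    using arith_geom_mean[of "{..k}" y, unfolded prod mean] y_nonneg
    by (intro power_mono) auto
  finally show ?thesis .
qed

lemma K_edges_mono: "U \<subseteq> W \<Longrightarrow> K_edges U \<subseteq> K_edges W"
  by (auto simp: K_edges_def)

lemma doubleton_in_K_edges: "a \<in> U \<Longrightarrow> b \<in> U \<Longrightarrow> a \<noteq> b \<Longrightarrow> {a, b} \<in> K_edges U"
  by (simp add: K_edges_def)

lemma finite_K_edges: "finite U \<Longrightarrow> finite (K_edges U)"
  by (rule finite_subset[of _ "Pow U"]) (auto simp: K_edges_def)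

lemma K_edges_remove:
  assumes "v \<in> U"
  shows "K_edges U = K_edges (U - {v}) \<union> (\<lambda>u. {v, u}) ` (U - {v})"
  using assms by (auto simp: K_edges_def card_2_iff)

lemma sum_K_edges_remove:
  assumes "finite U" "v \<in> U"
  shows "sum \<mu> (K_edges U) = sum \<mu> (K_edges (U - {v})) + (\<Sum>u \<in> U - {v}. \<mu> {v, u})"
proof -
  have "K_edges (U - {v}) \<inter> (\<lambda>u. {v, u}) ` (U - {v}) = {}"
    by (auto simp: K_edges_def)
  moreover have "inj_on (\<lambda>u. {v, u}) (U - {v})"
    by (auto simp: inj_on_def doubleton_eq_iff)
  ultimately show ?thesis
    using assms by (simp add: K_edges_remove sum.union_disjoint finite_K_edges sum.reindex)
qed

fun path_weight :: "('a set \<Rightarrow> real) \<Rightarrow> 'a list \<Rightarrow> real" where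
  "path_weight \<mu> (a # b # vs) = \<mu> {a, b} * path_weight \<mu> (b # vs)"
| "path_weight \<mu> _ = 1"

definition path_edges :: "'a list \<Rightarrow> 'a set set" where
  "path_edges vs = (\<lambda>i. {vs ! i, vs ! Suc i}) ` {..<length vs - 1}"

definition paths_from :: "nat \<Rightarrow> 'a set \<Rightarrow> 'a \<Rightarrow> 'a list set" where
  "paths_from k U v = {vs. length vs = Suc k \<and> distinct vs \<and> set vs \<subseteq> U \<and> hd vs = v}"

lemma finite_path_edges: "finite (path_edges vs)"
  by (simp add: path_edges_def)

lemma path_edges_Cons_Cons: "path_edges (a # b # vs) = insert {a, b} (path_edges (b # vs))"
  by (simp add: path_edges_def lessThan_Suc_eq_insert_0 image_image)

lemma path_edges_subset_set: "e \<in> path_edges vs \<Longrightarrow> e \<subseteq> set vs"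
  by (auto simp: path_edges_def)

lemma path_edges_rev: "path_edges (rev vs) = path_edges vs"
proof -
  have "path_edges (rev vs) \<subseteq> path_edges vs" for vs :: "'a list"
  proof
    fix e assume "e \<in> path_edges (rev vs)"
    then obtain i where i: "i < length vs - 1" "e = {rev vs ! i, rev vs ! Suc i}"
      by (auto simp: path_edges_def)
    define j where "j = length vs - 2 - i"
    have "j < length vs - 1" "e = {vs ! j, vs ! Suc j}"
      using i by (auto simp: j_def rev_nth Suc_diff_Suc numeral_2_eq_2)
    then show "e \<in> path_edges vs"
      by (auto simp: path_edges_def)
  qed
  from this[of vs] this[of "rev vs"] show ?thesis
    by simp
qed

lemma mu_sub_path_edges: "distinct vs \<Longrightarrow> mu_sub \<mu> (path_edges vs) = path_weight \<mu> vs"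
proof (induction \<mu> vs rule: path_weight.induct)
  case (1 \<mu> a b vs)
  then have "{a, b} \<notin> path_edges (b # vs)"
    using path_edges_subset_set by fastforce
  with 1 show ?case
    by (simp add: path_edges_Cons_Cons mu_sub_def finite_path_edges)
qed (simp_all add: path_edges_def mu_sub_def)

lemma path_weight_nonneg:
  assumes "\<forall>e \<in> K_edges U. 0 \<le> \<mu> e" "distinct vs" "set vs \<subseteq> U"
  shows "0 \<le> path_weight \<mu> vs"
  using assms by (induction \<mu> vs rule: path_weight.induct) (auto simp: doubleton_in_K_edges)

lemma finite_paths_from: "finite U \<Longrightarrow> finite (paths_from k U v)"
  by (rule finite_subset[OF _ finite_lists_length_eq[of U "Suc k"]]) (auto simp: paths_from_def)

lemma paths_from_0: "v \<in> U \<Longrightarrow> paths_from 0 U v = {[v]}"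
  by (auto simp: paths_from_def length_Suc_conv)

lemma paths_from_Suc:
  assumes "v \<in> U"
  shows "paths_from (Suc k) U v = (\<lambda>ws. v # ws) ` (\<Union>u \<in> U - {v}. paths_from k (U - {v}) u)"
  using assms by (fastforce simp: paths_from_def length_Suc_conv image_iff)

lemma sum_path_weight_paths_from_Suc:
  assumes "finite U" "v \<in> U"
  shows "sum (path_weight \<mu>) (paths_from (Suc k) U v)
    = (\<Sum>u \<in> U - {v}. \<mu> {v, u} * sum (path_weight \<mu>) (paths_from k (U - {v}) u))"
proof -
  have first_edge: "path_weight \<mu> (v # ws) = \<mu> {v, u} * path_weight \<mu> ws"
    if "ws \<in> paths_from k (U - {v}) u" for u ws
    using that by (cases ws) (auto simp: paths_from_def)
  have "\<forall>u \<in> U - {v}. \<forall>u' \<in> U - {v}. u \<noteq> u' \<longrightarrow>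
      paths_from k (U - {v}) u \<inter> paths_from k (U - {v}) u' = {}"
    by (auto simp: paths_from_def)
  then have "sum (path_weight \<mu>) (paths_from (Suc k) U v)
      = (\<Sum>u \<in> U - {v}. \<Sum>ws \<in> paths_from k (U - {v}) u. path_weight \<mu> (v # ws))"
    using assms
    by (simp add: paths_from_Suc sum.reindex sum.UNION_disjoint finite_paths_from)
  also have "\<dots> = (\<Sum>u \<in> U - {v}. \<mu> {v, u} * sum (path_weight \<mu>) (paths_from k (U - {v}) u))"
    by (simp add: first_edge sum_distrib_left)
  finally show ?thesis .
qed

lemma sum_path_weight_paths_from_le:
  assumes "finite U" "v \<in> U" "\<forall>e \<in> K_edges U. 0 \<le> \<mu> e"
  shows "sum (path_weight \<mu>) (paths_from k U v) \<le> (sum \<mu> (K_edges U) / real k) ^ k"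
  using assms
proof (induction k arbitrary: U v)
  case 0
  then show ?case
    by (simp add: paths_from_0)
next
  case (Suc k)
  let ?S = "\<Sum>u \<in> U - {v}. \<mu> {v, u}"
  let ?T = "sum \<mu> (K_edges (U - {v}))"
  have nonneg_rest: "\<forall>e \<in> K_edges (U - {v}). 0 \<le> \<mu> e"
    using Suc.prems(3) K_edges_mono[of "U - {v}" U] by blast
  have nonneg_first: "0 \<le> \<mu> {v, u}" if "u \<in> U - {v}" for u
    using that Suc.prems doubleton_in_K_edges[of v U u] by auto
  then have "0 \<le> ?S"
    by (rule sum_nonneg)
  have "0 \<le> ?T"
    using nonneg_rest by (simp add: sum_nonneg)
  have "sum (path_weight \<mu>) (paths_from (Suc k) U v)
      = (\<Sum>u \<in> U - {v}. \<mu> {v, u} * sum (path_weight \<mu>) (paths_from k (U - {v}) u))"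
    using Suc.prems(1,2) by (rule sum_path_weight_paths_from_Suc)
  also have "\<dots> \<le> (\<Sum>u \<in> U - {v}. \<mu> {v, u} * (?T / real k) ^ k)"
    using Suc.IH[of "U - {v}"] Suc.prems(1) nonneg_rest nonneg_first
    by (intro sum_mono mult_left_mono) auto
  also have "\<dots> = ?S * (?T / real k) ^ k"
    by (simp add: sum_distrib_right)
  also have "\<dots> \<le> (sum \<mu> (K_edges U) / real (Suc k)) ^ Suc k"
  proof (cases "k = 0")
    case True
    then show ?thesis
      using \<open>0 \<le> ?T\<close> sum_K_edges_remove[OF Suc.prems(1,2), of \<mu>] by simp
  next
    case False
    have "?S * (?T / real k) ^ k \<le> ((?S + real k * (?T / real k)) / real (Suc k)) ^ Suc k"
      using \<open>0 \<le> ?S\<close> \<open>0 \<le> ?T\<close> by (intro power_mult_le_mean_power) simp_all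
    also have "?S + real k * (?T / real k) = sum \<mu> (K_edges U)"
      using False sum_K_edges_remove[OF Suc.prems(1,2), of \<mu>] by simp
    finally show ?thesis .
  qed
  finally show ?case .
qed

lemma two_le_deg_in_path_edges:
  assumes "distinct vs" "0 < j" "Suc j < length vs"
  shows "2 \<le> deg_in (path_edges vs) (vs ! j)"
proof -
  let ?e1 = "{vs ! (j - 1), vs ! j}" and ?e2 = "{vs ! j, vs ! Suc j}"
  have "?e1 \<in> path_edges vs"
    unfolding path_edges_def using assms(2,3) by (intro image_eqI[of _ _ "j - 1"]) auto
  moreover have "?e2 \<in> path_edges vs"
    unfolding path_edges_def using assms(3) by (intro image_eqI[of _ _ j]) auto
  moreover have "vs ! (j - 1) \<notin> ?e2"
    using assms by (auto simp: nth_eq_iff_index_eq)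
  then have "?e1 \<noteq> ?e2"
    by blast
  ultimately have "card {?e1, ?e2} \<le> deg_in (path_edges vs) (vs ! j)"
    unfolding deg_in_def by (intro card_mono) (auto simp: finite_path_edges)
  with \<open>?e1 \<noteq> ?e2\<close> show ?thesis
    by simp
qed

lemma deg_in_path_edges_eq_1_imp_end:
  assumes "distinct vs" "deg_in (path_edges vs) x = 1"
  shows "x = hd vs \<or> x = last vs"
proof -
  have "x \<in> set vs"
  proof (rule ccontr)
    assume "x \<notin> set vs"
    then have "{e \<in> path_edges vs. x \<in> e} = {}"
      using path_edges_subset_set by blast
    with assms(2) show False
      by (simp add: deg_in_def)
  qed
  then obtain j where j: "j < length vs" "x = vs ! j"
    by (auto simp: in_set_conv_nth)
  have "j = 0 \<or> j = length vs - 1"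
    using two_le_deg_in_path_edges[OF assms(1), of j] assms(2) j by fastforce
  moreover have "vs \<noteq> []"
    using j(1) by auto
  ultimately show ?thesis
    using j(2) by (auto simp: hd_conv_nth last_conv_nth)
qed

lemma path_copies_deg_in_eq_1:
  assumes "P \<in> path_copies V m" "deg_in P x = 1"
  shows "P \<in> path_edges ` paths_from m V x"
proof -
  obtain vs where vs: "P = path_edges vs" "length vs = Suc m" "distinct vs" "set vs \<subseteq> V"
    using assms(1) by (auto simp: path_copies_def path_edges_def)
  then have "x = hd vs \<or> x = hd (rev vs)"
    using assms(2) deg_in_path_edges_eq_1_imp_end by (simp add: hd_rev)
  then have "vs \<in> paths_from m V x \<or> rev vs \<in> paths_from m V x"
    using vs by (auto simp: paths_from_def)
  then show ?thesis
    using vs(1) path_edges_rev by (metis image_eqI)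
qed

lemma sum_mu_sub_path_copies_deg_in_eq_1_le:
  assumes "finite V" "\<forall>e \<in> K_edges V. 0 \<le> \<mu> e"
  shows "(\<Sum>P \<in> {P \<in> path_copies V m. deg_in P x = 1}. mu_sub \<mu> P)
    \<le> sum (path_weight \<mu>) (paths_from m V x)"
proof -
  have weight: "mu_sub \<mu> (path_edges vs) = path_weight \<mu> vs"
    and weight_nonneg: "0 \<le> path_weight \<mu> vs" if "vs \<in> paths_from m V x" for vs
    using that assms(2) by (auto simp: paths_from_def mu_sub_path_edges intro: path_weight_nonneg)
  have "finite (paths_from m V x)"
    using assms(1) by (rule finite_paths_from)
  then have "(\<Sum>P \<in> {P \<in> path_copies V m. deg_in P x = 1}. mu_sub \<mu> P)
      \<le> sum (mu_sub \<mu>) (path_edges ` paths_from m V x)"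
    using path_copies_deg_in_eq_1 weight weight_nonneg by (intro sum_mono2) auto
  also have "\<dots> \<le> sum (mu_sub \<mu> \<circ> path_edges) (paths_from m V x)"
    using \<open>finite (paths_from m V x)\<close> weight weight_nonneg by (intro sum_image_le) auto
  also have "\<dots> = sum (path_weight \<mu>) (paths_from m V x)"
    using weight by simp
  finally show ?thesis .
qed

theorem proposition4p4:
  fixes V :: "'a set" and x :: 'a and \<mu> :: "'a set \<Rightarrow> real" and m :: nat
  assumes "finite V" and "x \<in> V" and "edge_prob_measure V \<mu>" and "m \<ge> 2"
  shows "(\<Sum>P \<in> {P \<in> path_copies V m. deg_in P x = 1}. mu_sub \<mu> P)
           \<le> mu_bar V \<mu> x * ((1 - mu_bar V \<mu> x) / (real m - 1)) ^ (m - 1)"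
proof -
  obtain k where m: "m = Suc k"
    using assms(4) by (cases m) auto
  have nonneg: "\<forall>e \<in> K_edges V. 0 \<le> \<mu> e" and total: "sum \<mu> (K_edges V) = 1"
    using assms(3) by (auto simp: edge_prob_measure_def)
  let ?rest = "sum \<mu> (K_edges (V - {x}))"
  have "(\<Sum>P \<in> {P \<in> path_copies V m. deg_in P x = 1}. mu_sub \<mu> P)
      \<le> sum (path_weight \<mu>) (paths_from m V x)"
    using assms(1) nonneg by (rule sum_mu_sub_path_copies_deg_in_eq_1_le)
  also have "\<dots> = (\<Sum>u \<in> V - {x}. \<mu> {x, u} * sum (path_weight \<mu>) (paths_from k (V - {x}) u))"
    unfolding m using assms(1,2) by (rule sum_path_weight_paths_from_Suc)
  also have "\<dots> \<le> (\<Sum>u \<in> V - {x}. \<mu> {x, u} * (?rest / real k) ^ k)"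
    using assms(1,2) nonneg K_edges_mono[of "V - {x}" V]
    by (intro sum_mono mult_left_mono sum_path_weight_paths_from_le)
      (auto simp: doubleton_in_K_edges)
  also have "\<dots> = mu_bar V \<mu> x * (?rest / real k) ^ k"
    by (simp add: mu_bar_def sum_distrib_right)
  also have "?rest = 1 - mu_bar V \<mu> x"
    using sum_K_edges_remove[OF assms(1,2), of \<mu>] by (simp add: total mu_bar_def)
  also have "real k = real m - 1"
    by (simp add: m)
  also have "k = m - 1"
    by (simp add: m)
  finally show ?thesis .
qed

end
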